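(* Let $N\ge3$, $\mu>0$, $c>0$, $p=2^*=\frac{2N}{N-2}$, and let $u\in S(c)$. Set $k_0=\frac{N^2c^2}{4}$ and $c_0=\big[\frac{N^2-2N}{4\mu}(\frac{4\mathcal S}{N^2})^{2^*/2}\big]^{1/(2^*-2)}$. If $P(u)\le0$ and $\|\nabla u\|_2^2=k_0$, then $c\ge c_0$. Consequently, if $P(u)\le0$ and $c<c_0$, then $\|\nabla u\|_2^2\ne k_0$.
   Context: $\mathcal S=\inf_{u\in D^{1,2}(\mathbb{R}^N)\setminus\{0\}}\|\nabla u\|_2^2/\|u\|_{2^*}^2$. $W=\{u\in H^1(\mathbb{R}^N):\int u^2|\log u^2|<\infty\}$, $S(c)=\{u\in W:\|u\|_2=c\}$, $P(u)=\|\nabla u\|_2^2-\mu\|u\|_{2^*}^{2^*}-\frac N2c^2$. *)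

theory Defs
  imports "HOL-Analysis.Analysis"
begin

text \<open>Functions on R^N are modelled as functions on a Euclidean space 'a with DIM('a) = N,
  equipped with Lebesgue measure.\<close>

definition partials :: "'a::euclidean_space list \<Rightarrow> ('a \<Rightarrow> real) \<Rightarrow> ('a \<Rightarrow> real)" where
  "partials bs \<phi> = fold (\<lambda>b f x. frechet_derivative f (at x) b) bs \<phi>"

definition smooth_fun :: "('a::euclidean_space \<Rightarrow> real) \<Rightarrow> bool" where
  "smooth_fun \<phi> \<longleftrightarrow> (\<forall>bs. set bs \<subseteq> Basis \<longrightarrow> (\<forall>x. partials bs \<phi> differentiable (at x)))"

definition test_fun :: "('a::euclidean_space \<Rightarrow> real) \<Rightarrow> bool" where
  "test_fun \<phi> \<longleftrightarrow> smooth_fun \<phi> \<and> compact (closure {x. \<phi> x \<noteq> 0})"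

definition loc_integrable :: "('a::euclidean_space \<Rightarrow> 'b::{banach, second_countable_topology}) \<Rightarrow> bool" where
  "loc_integrable f \<longleftrightarrow> (\<forall>K. compact K \<longrightarrow> set_integrable lebesgue K f)"

definition weak_grad :: "('a::euclidean_space \<Rightarrow> real) \<Rightarrow> ('a \<Rightarrow> 'a) \<Rightarrow> bool" where
  "weak_grad u G \<longleftrightarrow> loc_integrable u \<and> loc_integrable G \<and>
     (\<forall>\<phi>. test_fun \<phi> \<longrightarrow> (\<forall>b\<in>Basis.
        (\<integral>x. u x * frechet_derivative \<phi> (at x) b \<partial>lebesgue) = - (\<integral>x. (G x \<bullet> b) * \<phi> x \<partial>lebesgue)))"

definition grad :: "('a::euclidean_space \<Rightarrow> real) \<Rightarrow> ('a \<Rightarrow> 'a)" where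
  "grad u = (SOME G. weak_grad u G)"

definition Lp_norm :: "real \<Rightarrow> ('a::euclidean_space \<Rightarrow> real) \<Rightarrow> real" where
  "Lp_norm p u = (\<integral>x. \<bar>u x\<bar> powr p \<partial>lebesgue) powr (1 / p)"

definition memLp :: "real \<Rightarrow> ('a::euclidean_space \<Rightarrow> real) \<Rightarrow> bool" where
  "memLp p u \<longleftrightarrow> u \<in> borel_measurable lebesgue \<and> integrable lebesgue (\<lambda>x. \<bar>u x\<bar> powr p)"

definition grad_norm2 :: "('a::euclidean_space \<Rightarrow> real) \<Rightarrow> real" where
  "grad_norm2 u = (\<integral>x. (norm (grad u x))\<^sup>2 \<partial>lebesgue)"

definition crit_exp :: "nat \<Rightarrow> real" where
  "crit_exp N = 2 * real N / (real N - 2)"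

definition H1 :: "('a::euclidean_space \<Rightarrow> real) set" where
  "H1 = {u. memLp 2 u \<and> (\<exists>G. weak_grad u G \<and> G \<in> borel_measurable lebesgue
            \<and> integrable lebesgue (\<lambda>x. (norm (G x))\<^sup>2))}"

definition D12 :: "('a::euclidean_space \<Rightarrow> real) set" where
  "D12 = {u. memLp (crit_exp DIM('a)) u \<and> (\<exists>G. weak_grad u G \<and> G \<in> borel_measurable lebesgue
            \<and> integrable lebesgue (\<lambda>x. (norm (G x))\<^sup>2))}"

definition sobolev_S :: "'a::euclidean_space itself \<Rightarrow> real" where
  "sobolev_S _ = Inf {grad_norm2 u / (Lp_norm (crit_exp DIM('a)) u)\<^sup>2 | u :: 'a \<Rightarrow> real.
                     u \<in> D12 \<and> \<not> (AE x in lebesgue. u x = 0)}"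

definition W_space :: "('a::euclidean_space \<Rightarrow> real) set" where
  "W_space = {u. u \<in> H1 \<and> integrable lebesgue (\<lambda>x. (u x)\<^sup>2 * \<bar>ln ((u x)\<^sup>2)\<bar>)}"

definition S_c :: "real \<Rightarrow> ('a::euclidean_space \<Rightarrow> real) set" where
  "S_c c = {u. u \<in> W_space \<and> Lp_norm 2 u = c}"

definition P_fun :: "real \<Rightarrow> real \<Rightarrow> ('a::euclidean_space \<Rightarrow> real) \<Rightarrow> real" where
  "P_fun \<mu> c u = grad_norm2 u - \<mu> * (Lp_norm (crit_exp DIM('a)) u) powr (crit_exp DIM('a))
                  - real DIM('a) / 2 * c\<^sup>2"

end

theory Submission
  imports Defs
begin

text \<open>With |\<nabla>u|_2^2 = N^2 c^2/4, the condition P(u) \<le> 0 says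
  (N^2 - 2N) c^2/4 \<le> \<mu> |u|_p^p, while the Sobolev inequality gives
  |u|_p^2 \<le> N^2 c^2/(4S). Raising the latter to the power p/2 and combining,
  c^(p-2) \<ge> (N^2 - 2N)/(4\<mu>) (4S/N^2)^(p/2) = c_0^(p-2), and p > 2 gives c \<ge> c_0.\<close>

lemma crit_exp_gt_2: "N > 2 \<Longrightarrow> crit_exp N > 2"
  unfolding crit_exp_def by (simp add: field_simps)

lemma grad_norm2_nonneg: "grad_norm2 u \<ge> 0"
  unfolding grad_norm2_def by (rule integral_nonneg_AE) auto

lemma Lp_norm_eq_0_if_AE_zero:
  assumes "AE x in lebesgue. u x = 0"
  shows "Lp_norm p u = 0"
proof -
  have "AE x in lebesgue. \<bar>u x\<bar> powr p = 0"
    using assms by eventually_elim simp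
  then show ?thesis
    unfolding Lp_norm_def by (simp add: integral_eq_zero_AE)
qed

lemma integrable_if_Lp_norm_neq_0:
  assumes "Lp_norm p u \<noteq> 0"
  shows "integrable lebesgue (\<lambda>x. \<bar>u x\<bar> powr p)"
  using assms not_integrable_integral_eq unfolding Lp_norm_def by fastforce

lemma H1_imp_D12:
  assumes "u \<in> H1" and "integrable lebesgue (\<lambda>x. \<bar>u x\<bar> powr crit_exp DIM('a))"
  shows "(u :: 'a::euclidean_space \<Rightarrow> real) \<in> D12"
  using assms unfolding H1_def D12_def memLp_def by blast

lemma sobolev_S_le_quotient:
  fixes u :: "'a::euclidean_space \<Rightarrow> real"
  assumes "u \<in> D12" and "Lp_norm (crit_exp DIM('a)) u \<noteq> 0"
  shows "sobolev_S TYPE('a) \<le> grad_norm2 u / (Lp_norm (crit_exp DIM('a)) u)\<^sup>2"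
    and "sobolev_S TYPE('a) \<ge> 0"
proof -
  define T where "T = {grad_norm2 v / (Lp_norm (crit_exp DIM('a)) v)\<^sup>2 | v :: 'a \<Rightarrow> real.
                     v \<in> D12 \<and> \<not> (AE x in lebesgue. v x = 0)}"
  have S_eq: "sobolev_S TYPE('a) = Inf T"
    unfolding sobolev_S_def T_def ..
  have T_nonneg: "t \<ge> 0" if "t \<in> T" for t
    using that unfolding T_def by (auto intro: divide_nonneg_nonneg grad_norm2_nonneg)
  have u_in_T: "grad_norm2 u / (Lp_norm (crit_exp DIM('a)) u)\<^sup>2 \<in> T"
    using assms Lp_norm_eq_0_if_AE_zero unfolding T_def by blast
  show "sobolev_S TYPE('a) \<le> grad_norm2 u / (Lp_norm (crit_exp DIM('a)) u)\<^sup>2"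
    unfolding S_eq by (rule cInf_lower[OF u_in_T bdd_belowI[of T 0, OF T_nonneg]])
  show "sobolev_S TYPE('a) \<ge> 0"
    unfolding S_eq using u_in_T T_nonneg by (blast intro: cInf_greatest)
qed

lemma sobolev_inequality:
  fixes u :: "'a::euclidean_space \<Rightarrow> real"
  assumes "u \<in> D12" and "Lp_norm (crit_exp DIM('a)) u \<noteq> 0"
  shows "sobolev_S TYPE('a) * (Lp_norm (crit_exp DIM('a)) u)\<^sup>2 \<le> grad_norm2 u"
  using sobolev_S_le_quotient(1)[OF assms] assms(2) by (simp add: pos_le_divide_eq)

text \<open>No division by S occurs, so the degenerate case S = 0 (where the bound is 0) is covered.\<close>

lemma lower_bound_from_sobolev_constraint:
  fixes p A K S L \<mu> c :: real
  assumes p: "p > 2" and c: "c > 0" and \<mu>: "\<mu> > 0" and K: "K > 0"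
    and A: "A \<ge> 0" and S: "S \<ge> 0" and L: "L \<ge> 0"
    and sobolev: "S * L\<^sup>2 \<le> K * c\<^sup>2" and constraint: "A * c\<^sup>2 \<le> \<mu> * L powr p"
  shows "(A / \<mu> * (S / K) powr (p / 2)) powr (1 / (p - 2)) \<le> c"
proof -
  define Q where "Q = (S / K) powr (p / 2)"
  have Q: "Q \<ge> 0" unfolding Q_def by simp
  have sq_powr: "(x\<^sup>2) powr (p / 2) = x powr p" if "x \<ge> 0" for x :: real
    using that by (simp add: powr_powr flip: powr_numeral)
  have "Q * L powr p = (S / K * L\<^sup>2) powr (p / 2)"
    unfolding Q_def using S K L by (subst powr_mult) (simp_all add: sq_powr)
  also have "\<dots> \<le> (c\<^sup>2) powr (p / 2)"
    using sobolev S K p by (intro powr_mono2) (auto simp: field_simps)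
  also have "\<dots> = c powr p"
    using c by (simp add: sq_powr)
  also have "\<dots> = c\<^sup>2 * c powr (p - 2)"
    using c by (simp add: powr_diff powr_numeral)
  finally have QL: "Q * L powr p \<le> c\<^sup>2 * c powr (p - 2)" .
  have "c\<^sup>2 * (A * Q) \<le> \<mu> * (Q * L powr p)"
    using mult_right_mono[OF constraint Q] by (simp add: ac_simps)
  also have "\<dots> \<le> c\<^sup>2 * (\<mu> * c powr (p - 2))"
    using mult_left_mono[OF QL, of \<mu>] \<mu> by (simp add: ac_simps)
  finally have "A / \<mu> * Q \<le> c powr (p - 2)"
    using c \<mu> by (simp add: field_simps)
  then have "(A / \<mu> * Q) powr (1 / (p - 2)) \<le> (c powr (p - 2)) powr (1 / (p - 2))"
    using A \<mu> Q p by (intro powr_mono2) auto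
  also have "\<dots> = c"
    using c p by (simp add: powr_powr)
  finally show ?thesis unfolding Q_def .
qed

theorem lemma5p1:
  fixes u :: "'a::euclidean_space \<Rightarrow> real" and \<mu> c :: real and N :: nat
  assumes "N = DIM('a)" and "N \<ge> 3" and "\<mu> > 0" and "c > 0" and "u \<in> S_c c"
  defines "k0 \<equiv> real N ^ 2 * c ^ 2 / 4"
      and "c0 \<equiv> ((real N ^ 2 - 2 * real N) / (4 * \<mu>)
                  * (4 * sobolev_S TYPE('a) / real N ^ 2) powr (crit_exp N / 2))
                 powr (1 / (crit_exp N - 2))"
  shows "(P_fun \<mu> c u \<le> 0 \<and> grad_norm2 u = k0 \<longrightarrow> c \<ge> c0)
       \<and> (P_fun \<mu> c u \<le> 0 \<and> c < c0 \<longrightarrow> grad_norm2 u \<noteq> k0)"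
proof -
  define p L A where "p = crit_exp N" and "L = Lp_norm p u" and "A = (real N ^ 2 - 2 * real N) / 4"
  have N: "real N \<ge> 3" using assms(2) by simp
  have A_pos: "A > 0"
    using N unfolding A_def by (simp add: power2_eq_square)
  have "c \<ge> c0" if "P_fun \<mu> c u \<le> 0" and grad: "grad_norm2 u = k0"
  proof -
    have constraint: "A * c\<^sup>2 \<le> \<mu> * L powr p"
      using that unfolding P_fun_def k0_def A_def L_def p_def assms(1)
      by (simp add: power2_eq_square field_simps)
    have "A * c\<^sup>2 > 0"
      using A_pos assms(4) by simp
    then have "L \<noteq> 0"
      using constraint by auto
    then have L_neq_0: "Lp_norm (crit_exp DIM('a)) u \<noteq> 0"
      unfolding L_def p_def assms(1) .
    then have "u \<in> D12"
      using assms(5) integrable_if_Lp_norm_neq_0 H1_imp_D12 unfolding S_c_def W_space_def by blast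
    have sobolev: "sobolev_S TYPE('a) * L\<^sup>2 \<le> real N ^ 2 / 4 * c\<^sup>2"
      using sobolev_inequality[OF \<open>u \<in> D12\<close> L_neq_0] grad
      unfolding L_def p_def k0_def assms(1) by simp
    have "(A / \<mu> * (sobolev_S TYPE('a) / (real N ^ 2 / 4)) powr (p / 2)) powr (1 / (p - 2)) \<le> c"
      using crit_exp_gt_2[of N] N A_pos sobolev_S_le_quotient(2)[OF \<open>u \<in> D12\<close> L_neq_0]
      by (intro lower_bound_from_sobolev_constraint[OF _ assms(4,3) _ _ _ _ sobolev constraint])
        (simp_all add: p_def L_def Lp_norm_def)
    then show ?thesis
      unfolding c0_def A_def p_def by (simp add: field_simps)
  qed
  then show ?thesis by auto
qed

end
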